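(* Let $U$ be a single-qubit unitary and let $U'$ be a qutrit unitary emulating $U$. Suppose we are given the two-qutrit $\ket{2}$-controlled $U'$ gate. Then there is a three-qutrit circuit consisting of this given gate together with qutrit Clifford gates that emulates the three-qubit doubly-controlled gate $\mathrm{CC}U$ (which applies $U$ to the third qubit iff the first two qubits are both $\ket{1}$); in particular its non-Clifford cost equals that of the given $\ket{2}$-controlled $U'$ gate.
   Context: A qutrit is $\mathbb{C}^3$ with basis $\ket{0},\ket{1},\ket{2}$; $\omega=e^{2\pi i/3}$. Qutrit Clifford gates are those generated (up to global phase) by $S=\mathrm{diag}(1,1,\omega)$, $H=\frac{1}{\sqrt3}\begin{pmatrix}1&1&1\\1&\omega&\bar\omega\\1&\bar\omega&\omega\end{pmatrix}$ and $\mathrm{CX}:\ket{i,j}\mapsto\ket{i,(i+j)\bmod3}$. A qutrit unitary emulates a qubit unitary $U$ if, identifying qubit basis states $\ket{x}$, $x\in\{0,1\}^n$, with the equally labelled qutrit basis states, it maps each $\ket{x}$ to $U\ket{x}$. For a qutrit unitary $V$, the $\ket{2}$-controlled $V$ is the unitary acting as $\ket{0}\otimes\ket{\psi}\mapsto\ket{0}\otimes\ket{\psi}$, $\ket{1}\otimes\ket{\psi}\mapsto\ket{1}\otimes\ket{\psi}$, $\ket{2}\otimes\ket{\psi}\mapsto\ket{2}\otimes V\ket{\psi}$. The non-Clifford cost of a circuit is its number of non-Clifford gates. *)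

theory Defs
  imports Complex_Main "Jordan_Normal_Form.Matrix"
begin

(* Conventions: n-qubit/n-qutrit basis states are encoded big-endian:
   |x_0 ... x_{n-1}> has index sum_k x_k * d^(n-1-k)  (d = 2 or 3).
   Operators are complex matrices (column j = image of basis state j). *)

definition adj :: "complex mat \<Rightarrow> complex mat" where
  "adj M = mat (dim_col M) (dim_row M) (\<lambda>(i,j). cnj (M $$ (j,i)))"

definition unitary_mat :: "nat \<Rightarrow> complex mat \<Rightarrow> bool" where
  "unitary_mat n M \<longleftrightarrow> M \<in> carrier_mat n n \<and> M * adj M = 1\<^sub>m n \<and> adj M * M = 1\<^sub>m n"

(* qubit basis index i < 2^n  \<mapsto>  equally labelled qutrit basis index *)
definition q2t :: "nat \<Rightarrow> nat \<Rightarrow> nat" where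
  "q2t n i = (\<Sum>k<n. ((i div 2^k) mod 2) * 3^k)"

(* W (on n qutrits) emulates V (on n qubits): W |x> = V |x> for all qubit basis states x *)
definition emulates :: "nat \<Rightarrow> complex mat \<Rightarrow> complex mat \<Rightarrow> bool" where
  "emulates n W V \<longleftrightarrow> W \<in> carrier_mat (3^n) (3^n) \<and> V \<in> carrier_mat (2^n) (2^n) \<and>
     (\<forall>i < 2^n. \<forall>r < 3^n. W $$ (r, q2t n i) = (\<Sum>j<2^n. if q2t n j = r then V $$ (j, i) else 0))"

definition omega :: complex where "omega = cis (2 * pi / 3)"

definition S_gate :: "complex mat" where
  "S_gate = mat 3 3 (\<lambda>(i,j). if i = j then (if i = 2 then omega else 1) else 0)"

definition H_gate :: "complex mat" where
  "H_gate = mat 3 3 (\<lambda>(i,j). omega ^ (i * j) / complex_of_real (sqrt 3))"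

(* CX |i,j> = |i, (i+j) mod 3>, index of |a,b> is 3a+b *)
definition CX_gate :: "complex mat" where
  "CX_gate = mat 9 9 (\<lambda>(r,c). if r div 3 = c div 3 \<and> r mod 3 = (c div 3 + c mod 3) mod 3 then 1 else 0)"

(* |2>-controlled V: control is the first qutrit *)
definition ctrl2 :: "complex mat \<Rightarrow> complex mat" where
  "ctrl2 V = mat 9 9 (\<lambda>(r,c). if r div 3 = c div 3 then
      (if c div 3 = 2 then V $$ (r mod 3, c mod 3) else (if r mod 3 = c mod 3 then 1 else 0))
     else 0)"

definition trit :: "nat \<Rightarrow> nat \<Rightarrow> nat" where
  "trit r w = (r div 3^(2 - w)) mod 3"

definition place1 :: "complex mat \<Rightarrow> nat \<Rightarrow> complex mat" where
  "place1 V p = mat 27 27 (\<lambda>(r,c).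
     if (\<forall>w<3. w \<noteq> p \<longrightarrow> trit r w = trit c w) then V $$ (trit r p, trit c p) else 0)"

(* two-qutrit gate G applied to ordered wires (p,q) (p = first tensor factor of G) *)
definition place2 :: "complex mat \<Rightarrow> nat \<Rightarrow> nat \<Rightarrow> complex mat" where
  "place2 G p q = mat 27 27 (\<lambda>(r,c).
     if (\<forall>w<3. w \<noteq> p \<and> w \<noteq> q \<longrightarrow> trit r w = trit c w)
     then G $$ (3 * trit r p + trit r q, 3 * trit c p + trit c q) else 0)"

inductive clifford3 :: "complex mat \<Rightarrow> bool" where
  id: "clifford3 (1\<^sub>m 27)"
| S: "\<lbrakk>clifford3 M; p < 3\<rbrakk> \<Longrightarrow> clifford3 (place1 S_gate p * M)"
| H: "\<lbrakk>clifford3 M; p < 3\<rbrakk> \<Longrightarrow> clifford3 (place1 H_gate p * M)"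
| CX: "\<lbrakk>clifford3 M; p < 3; q < 3; p \<noteq> q\<rbrakk> \<Longrightarrow> clifford3 (place2 CX_gate p q * M)"
| phase: "\<lbrakk>clifford3 M; cmod z = 1\<rbrakk> \<Longrightarrow> clifford3 (z \<cdot>\<^sub>m M)"

(* three-qubit doubly-controlled U: controls qubits 0,1, target qubit 2 *)
definition CC_gate :: "complex mat \<Rightarrow> complex mat" where
  "CC_gate U = mat 8 8 (\<lambda>(r,c). if r div 2 = c div 2 then
      (if c div 2 = 3 then U $$ (r mod 2, c mod 2) else (if r mod 2 = c mod 2 then 1 else 0))
     else 0)"

end

theory Submission
  imports Defs
begin

(* Let P be CX with control wire 0 and target wire 1. It permutes the basis by
   (a, b, d) |-> (a, a + b mod 3, d), and P * P = P^-1 is again Clifford. Conjugating the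
   |2>-controlled U' on wires 1, 2 by P gives the gate applying U' to wire 2 exactly when
   a + b = 2 (mod 3). For qubit values a, b this means a = b = 1, and on |0>, |1> the gate U'
   acts as U without leaving the qubit subspace, so P * P * ctrl2 U' * P emulates CCU. *)

lemma add_mod_cancel_left:
  fixes a b b' m :: nat
  assumes "b < m" "b' < m"
  shows "(a + b) mod m = (a + b') mod m \<longleftrightarrow> b = b'"
proof
  assume eq: "(a + b) mod m = (a + b') mod m"
  define c where "c = a mod m"
  have c: "c < m"
    using assms c_def by simp
  have wrap: "(c + x) mod m = (if c + x < m then c + x else c + x - m)" if "x < m" for x
    using c that by (simp add: mod_if[of "c + x"])
  have "(c + b) mod m = (c + b') mod m"
    using eq unfolding c_def by (simp add: mod_simps)
  then show "b = b'"
    using wrap[OF assms(1)] wrap[OF assms(2)] c assms by (simp split: if_splits)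
qed simp

lemma mult_add_eq_iff:
  fixes a a' b b' m :: nat
  assumes "b < m" "b' < m"
  shows "m * a + b = m * a' + b' \<longleftrightarrow> a = a' \<and> b = b'"
proof
  assume eq: "m * a + b = m * a' + b'"
  have "(m * a + b) div m = (m * a' + b') div m" "(m * a + b) mod m = (m * a' + b') mod m"
    using eq by simp_all
  then show "a = a' \<and> b = b'"
    using assms by simp
qed simp

lemma index_mult_unit_row:
  fixes P A :: "'a :: semiring_1 mat"
  assumes "P \<in> carrier_mat k n" "A \<in> carrier_mat n m" "r < k" "c < m" "s < n"
    and "\<And>j. j < n \<Longrightarrow> P $$ (r, j) = (if j = s then 1 else 0)"
  shows "(P * A) $$ (r, c) = A $$ (s, c)"
proof -
  have "(P * A) $$ (r, c) = (\<Sum>j<n. P $$ (r, j) * A $$ (j, c))"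
    using assms(1-4) by (simp add: scalar_prod_def atLeast0LessThan)
  also have "\<dots> = (\<Sum>j<n. if j = s then A $$ (j, c) else 0)"
    using assms(6) by (intro sum.cong) auto
  finally show ?thesis
    using assms(5) by simp
qed

lemma index_mult_unit_col:
  fixes P A :: "'a :: semiring_1 mat"
  assumes "A \<in> carrier_mat k n" "P \<in> carrier_mat n m" "r < k" "c < m" "s < n"
    and "\<And>j. j < n \<Longrightarrow> P $$ (j, c) = (if j = s then 1 else 0)"
  shows "(A * P) $$ (r, c) = A $$ (r, s)"
proof -
  have "(A * P) $$ (r, c) = (\<Sum>j<n. A $$ (r, j) * P $$ (j, c))"
    using assms(1-4) by (simp add: scalar_prod_def atLeast0LessThan)
  also have "\<dots> = (\<Sum>j<n. if j = s then A $$ (r, j) else 0)"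
    using assms(6) by (intro sum.cong) auto
  finally show ?thesis
    using assms(5) by simp
qed

lemma trit_lt: "trit r w < 3"
  by (simp add: trit_def)

lemma trit_digits:
  fixes a b d :: nat
  assumes "a < 3" "b < 3" "d < 3"
  shows "trit (9 * a + 3 * b + d) 0 = a" "trit (9 * a + 3 * b + d) 1 = b" "trit (9 * a + 3 * b + d) 2 = d"
proof -
  have "(9 * a + 3 * b + d) div 3 = 3*a + b"
    by (rule div_nat_eqI) (use assms in simp_all)
  moreover have "(9 * a + 3 * b + d) div 9 = a"
    by (rule div_nat_eqI) (use assms in simp_all)
  moreover have "(9 * a + 3 * b + d) mod 3 = d"
    by (rule mod_nat_eqI) (use assms in simp_all)
  ultimately show "trit (9 * a + 3 * b + d) 0 = a" "trit (9 * a + 3 * b + d) 1 = b" "trit (9 * a + 3 * b + d) 2 = d"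
    using assms by (simp_all add: trit_def)
qed

lemma digits3_eq_iff:
  fixes a b d a' b' d' :: nat
  assumes "b < 3" "d < 3" "b' < 3" "d' < 3"
  shows "9 * a + 3 * b + d = 9 * a' + 3 * b' + d' \<longleftrightarrow> a = a' \<and> b = b' \<and> d = d'"
proof -
  have "9 * a + 3 * b + d = 9 * a' + 3 * b' + d' \<longleftrightarrow> 3 * (3 * a + b) + d = 3 * (3 * a' + b') + d'"
    by simp
  also have "\<dots> \<longleftrightarrow> 3 * a + b = 3 * a' + b' \<and> d = d'"
    using assms by (intro mult_add_eq_iff)
  also have "\<dots> \<longleftrightarrow> a = a' \<and> b = b' \<and> d = d'"
    using assms mult_add_eq_iff[of b 3 b'] by simp
  finally show ?thesis .
qed

lemma trit_decomp:
  assumes "r < 27"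
  shows "9 * trit r 0 + 3 * trit r 1 + trit r 2 = r"
proof -
  have "3 * (r div 3 mod 3) + r mod 3 = r mod 9"
    using mod_mult2_eq[of r 3 3] by simp
  then show ?thesis
    using assms by (simp add: trit_def add.assoc)
qed

lemma trits3_cases:
  assumes "r < (27::nat)"
  obtains a b d where "a < 3" "b < 3" "d < 3" "r = 9 * a + 3 * b + d"
  using trit_decomp[OF assms] trit_lt by metis

lemma index27_eq_iff:
  assumes "r < 27" "c < 27"
  shows "r = c \<longleftrightarrow> trit r 0 = trit c 0 \<and> trit r 1 = trit c 1 \<and> trit r 2 = trit c 2"
  using trit_decomp[OF assms(1), symmetric] trit_decomp[OF assms(2), symmetric] by auto

lemma all_less_3: "(\<forall>w<3. P (w::nat)) \<longleftrightarrow> P 0 \<and> P 1 \<and> P 2"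
  by (auto simp: less_Suc_eq numeral_3_eq_3 numeral_2_eq_2)

lemma base3_digits:
  fixes a b :: nat
  assumes "b < 3"
  shows "(3 * a + b) div 3 = a" "(3 * a + b) mod 3 = b"
  using assms by simp_all

lemma bits3_eq_iff:
  fixes x y z x' y' z' :: nat
  assumes "y < 2" "z < 2" "y' < 2" "z' < 2"
  shows "4 * x + 2 * y + z = 4 * x' + 2 * y' + z' \<longleftrightarrow> x = x' \<and> y = y' \<and> z = z'"
proof -
  have "4 * x + 2 * y + z = 4 * x' + 2 * y' + z' \<longleftrightarrow> 2 * (2 * x + y) + z = 2 * (2 * x' + y') + z'"
    by simp
  also have "\<dots> \<longleftrightarrow> 2 * x + y = 2 * x' + y' \<and> z = z'"
    using assms by (intro mult_add_eq_iff)
  also have "\<dots> \<longleftrightarrow> x = x' \<and> y = y' \<and> z = z'"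
    using assms mult_add_eq_iff[of y 2 y'] by simp
  finally show ?thesis .
qed

lemma bits3_cases:
  assumes "i < (8::nat)"
  obtains x y z where "x < 2" "y < 2" "z < 2" "i = 4 * x + 2 * y + z"
proof
  have "2 * (i div 2 mod 2) + i mod 2 = i mod 4"
    using mod_mult2_eq[of i 2 2] by simp
  then show "i = 4 * (i div 4) + 2 * (i div 2 mod 2) + i mod 2"
    by (simp add: add.assoc)
qed (use assms in auto)

lemma q2t_3_bits:
  fixes x y z :: nat
  assumes "x < 2" "y < 2" "z < 2"
  shows "q2t 3 (4 * x + 2 * y + z) = 9 * x + 3 * y + z"
  using assms by (auto simp: q2t_def less_2_cases_iff lessThan_nat_numeral)

lemma sum_q2t_3:
  fixes a b d :: nat
  assumes "a < 3" "b < 3" "d < 3"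
  shows "(\<Sum>j<8. if q2t 3 j = 9 * a + 3 * b + d then f j else 0)
    = (if a < 2 \<and> b < 2 \<and> d < 2 then f (4 * a + 2 * b + d) else 0)"
proof -
  have "q2t 3 j = 9 * a + 3 * b + d \<longleftrightarrow> a < 2 \<and> b < 2 \<and> d < 2 \<and> j = 4 * a + 2 * b + d"
    if j: "j < 8" for j
  proof -
    obtain x y z where xyz: "x < 2" "y < 2" "z < 2" "j = 4 * x + 2 * y + z"
      using bits3_cases[OF j] .
    have "q2t 3 j = 9 * a + 3 * b + d \<longleftrightarrow> x = a \<and> y = b \<and> z = d"
      using q2t_3_bits[OF xyz(1-3)] xyz digits3_eq_iff[of y z b d x a] assms by simp
    also have "\<dots> \<longleftrightarrow> a < 2 \<and> b < 2 \<and> d < 2 \<and> j = 4 * a + 2 * b + d"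
      using xyz bits3_eq_iff[of b d y z a x] by auto
    finally show ?thesis .
  qed
  then have "(\<Sum>j<8. if q2t 3 j = 9 * a + 3 * b + d then f j else 0)
    = (\<Sum>j<8. if a < 2 \<and> b < 2 \<and> d < 2 \<and> j = 4 * a + 2 * b + d then f j else 0)"
    by (intro sum.cong) auto
  also have "\<dots> = (if a < 2 \<and> b < 2 \<and> d < 2 then f (4 * a + 2 * b + d) else 0)"
  proof (cases "a < 2 \<and> b < 2 \<and> d < 2")
    case True
    then have "4 * a + 2 * b + d < 8"
      by linarith
    with True show ?thesis
      by (simp add: sum.delta)
  next
    case False
    then show ?thesis
      by auto
  qed
  finally show ?thesis .
qed

lemma emulates_1_index:
  assumes "emulates 1 W V" "d < 3" "z < 2"
  shows "W $$ (d, z) = (if d < 2 then V $$ (d, z) else 0)"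
proof -
  have "q2t 1 z = z"
    using assms(3) by (simp add: q2t_def)
  then have "W $$ (d, z) = (\<Sum>j<2. if j = d then V $$ (j, z) else 0)"
    using assms unfolding emulates_def by (auto simp: q2t_def)
  then show ?thesis
    by simp
qed

lemma CC_gate_index:
  fixes a b d x y z :: nat
  assumes "a < 2" "b < 2" "d < 2" "x < 2" "y < 2" "z < 2"
  shows "CC_gate V $$ (4 * a + 2 * b + d, 4 * x + 2 * y + z) =
    (if a = x \<and> b = y then (if x = 1 \<and> y = 1 then V $$ (d, z) else if d = z then 1 else 0) else 0)"
proof -
  have bits2: "(4 * u + 2 * v + w) div 2 = 2 * u + v" "(4 * u + 2 * v + w) mod 2 = w"
    if "w < 2" for u v w :: nat
  proof -
    have eq: "4 * u + 2 * v + w = w + 2 * (2 * u + v)"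
      by simp
    show "(4 * u + 2 * v + w) div 2 = 2 * u + v"
      using that by simp
    show "(4 * u + 2 * v + w) mod 2 = w"
      unfolding eq mod_mult_self2 using that by simp
  qed
  have lt: "4 * a + 2 * b + d < 8" "4 * x + 2 * y + z < 8"
    using assms by linarith+
  have "2 * a + b = 2 * x + y \<longleftrightarrow> a = x \<and> b = y"
    using assms mult_add_eq_iff[of b 2 y a x] by simp
  moreover have "2 * x + y = 3 \<longleftrightarrow> x = 1 \<and> y = 1"
    using assms(4,5) by (auto simp: less_2_cases_iff)
  ultimately show ?thesis
    unfolding CC_gate_def index_mat(1)[OF lt] prod.case bits2[OF assms(3)] bits2[OF assms(6)]
    by simp
qed

(* The basis permutation of CX^k with control wire 0 and target wire 1. *)
definition cx_shear :: "nat \<Rightarrow> nat \<Rightarrow> nat" where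
  "cx_shear k r = 9 * trit r 0 + 3 * ((k * trit r 0 + trit r 1) mod 3) + trit r 2"

lemma trit_cx_shear:
  "trit (cx_shear k r) 0 = trit r 0"
  "trit (cx_shear k r) 1 = (k * trit r 0 + trit r 1) mod 3"
  "trit (cx_shear k r) 2 = trit r 2"
  unfolding cx_shear_def
  using trit_digits[OF trit_lt[of r 0] _ trit_lt[of r 2], of "(k * trit r 0 + trit r 1) mod 3"]
  by simp_all

lemma cx_shear_lt: "cx_shear k r < 27"
  using trit_lt[of r 0] trit_lt[of r 2] unfolding cx_shear_def by simp

lemma cx_shear_cx_shear: "cx_shear k (cx_shear l r) = cx_shear ((k + l) mod 3) r"
proof -
  have "(k * a + (l * a + b) mod 3) mod 3 = ((k + l) * a + b) mod 3" for a b :: nat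
    by (simp add: mod_add_right_eq algebra_simps)
  moreover have "((k + l) mod 3 * a + b) mod 3 = ((k + l) * a + b) mod 3" for a b :: nat
    by (metis mod_add_left_eq mod_mult_left_eq)
  ultimately show ?thesis
    unfolding cx_shear_def[of k] trit_cx_shear cx_shear_def[of "(k + l) mod 3"] by simp
qed

lemma cx_shear_0: "r < 27 \<Longrightarrow> cx_shear 0 r = r"
  using trit_decomp[of r] trit_lt[of r 1] unfolding cx_shear_def by simp

lemma cx_shear_eq_iff:
  assumes "r < 27" "c < 27"
  shows "r = cx_shear 1 c \<longleftrightarrow> c = cx_shear 2 r"
proof -
  have "cx_shear 2 (cx_shear 1 c) = c" "cx_shear 1 (cx_shear 2 r) = r"
    unfolding cx_shear_cx_shear using cx_shear_0 assms by simp_all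
  then show ?thesis
    by auto
qed

lemma place2_CX_01_index:
  assumes "r < 27" "c < 27"
  shows "place2 CX_gate 0 1 $$ (r, c) = (if r = cx_shear 1 c then 1 else 0)"
proof -
  have digit_pair_lt: "3 * a + b < 9" if "a < 3" "b < 3" for a b :: nat
    using that by linarith
  have "place2 CX_gate 0 1 $$ (r, c) = (if trit r 0 = trit c 0 \<and>
      trit r 1 = (1 * trit c 0 + trit c 1) mod 3 \<and> trit r 2 = trit c 2 then 1 else 0)"
    using assms by (auto simp: place2_def CX_gate_def all_less_3 base3_digits trit_lt digit_pair_lt)
  then show ?thesis
    unfolding index27_eq_iff[OF assms(1) cx_shear_lt] trit_cx_shear .
qed

lemma place2_CX_01_carrier: "place2 CX_gate 0 1 \<in> carrier_mat 27 27"
  by (simp add: place2_def)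

lemma place2_CX_01_conj_index:
  assumes "A \<in> carrier_mat 27 27" "r < 27" "c < 27"
  shows "(place2 CX_gate 0 1 * place2 CX_gate 0 1 * A * place2 CX_gate 0 1) $$ (r, c)
    = A $$ (cx_shear 1 r, cx_shear 1 c)"
proof -
  let ?P = "place2 CX_gate 0 1"
  have P: "?P \<in> carrier_mat 27 27"
    by (rule place2_CX_01_carrier)
  have col: "?P $$ (j, c) = (if j = cx_shear 1 c then 1 else 0)" if "j < 27" for j
    by (rule place2_CX_01_index[OF that assms(3)])
  have row: "?P $$ (x, j) = (if j = cx_shear 2 x then 1 else 0)" if "x < 27" "j < 27" for x j
    unfolding place2_CX_01_index[OF that] cx_shear_eq_iff[OF that] ..
  have assoc: "?P * ?P * A = ?P * (?P * A)"
    by (rule assoc_mult_mat[OF P P assms(1)])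
  have "(?P * ?P * A * ?P) $$ (r, c) = (?P * (?P * A)) $$ (r, cx_shear 1 c)"
    unfolding assoc using P assms by (intro index_mult_unit_col[OF _ P _ _ cx_shear_lt col]) auto
  also have "\<dots> = (?P * A) $$ (cx_shear 2 r, cx_shear 1 c)"
    using P assms cx_shear_lt by (intro index_mult_unit_row[OF P _ _ _ cx_shear_lt row]) auto
  also have "\<dots> = A $$ (cx_shear 2 (cx_shear 2 r), cx_shear 1 c)"
    using P assms cx_shear_lt by (intro index_mult_unit_row[OF P _ _ _ cx_shear_lt row]) auto
  also have "cx_shear 2 (cx_shear 2 r) = cx_shear 1 r"
    by (simp add: cx_shear_cx_shear)
  finally show ?thesis .
qed

definition ctrl_if :: "(nat \<Rightarrow> nat \<Rightarrow> bool) \<Rightarrow> complex mat \<Rightarrow> complex mat" where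
  "ctrl_if \<phi> V = mat 27 27 (\<lambda>(r, c).
     if trit r 0 = trit c 0 \<and> trit r 1 = trit c 1 then
       (if \<phi> (trit c 0) (trit c 1) then V $$ (trit r 2, trit c 2)
        else if trit r 2 = trit c 2 then 1 else 0)
     else 0)"

lemma ctrl_if_carrier: "ctrl_if \<phi> V \<in> carrier_mat 27 27"
  by (simp add: ctrl_if_def)

lemma ctrl_if_index:
  fixes a b d a' b' d' :: nat
  assumes "a < 3" "b < 3" "d < 3" "a' < 3" "b' < 3" "d' < 3"
  shows "ctrl_if \<phi> V $$ (9 * a + 3 * b + d, 9 * a' + 3 * b' + d') =
    (if a = a' \<and> b = b' then (if \<phi> a' b' then V $$ (d, d') else if d = d' then 1 else 0) else 0)"
proof -
  have "9 * a + 3 * b + d < 27" "9 * a' + 3 * b' + d' < 27"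
    using assms by linarith+
  then show ?thesis
    unfolding ctrl_if_def index_mat(1)[OF \<open>9 * a + 3 * b + d < 27\<close> \<open>9 * a' + 3 * b' + d' < 27\<close>]
      prod.case trit_digits[OF assms(1-3)] trit_digits[OF assms(4-6)]
    by simp
qed

lemma ctrl2_index:
  fixes a b a' b' :: nat
  assumes "a < 3" "b < 3" "a' < 3" "b' < 3"
  shows "ctrl2 V $$ (3 * a + b, 3 * a' + b') =
    (if a = a' then (if a' = 2 then V $$ (b, b') else if b = b' then 1 else 0) else 0)"
proof -
  have "3 * a + b < 9" "3 * a' + b' < 9"
    using assms by linarith+
  then show ?thesis
    unfolding ctrl2_def index_mat(1)[OF \<open>3 * a + b < 9\<close> \<open>3 * a' + b' < 9\<close>] prod.case
      base3_digits[OF assms(2)] base3_digits[OF assms(4)]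
    by simp
qed

lemma place2_ctrl2_12: "place2 (ctrl2 V) 1 2 = ctrl_if (\<lambda>a b. b = 2) V"
proof (rule eq_matI)
  fix r c assume "r < dim_row (ctrl_if (\<lambda>a b. b = 2) V)" "c < dim_col (ctrl_if (\<lambda>a b. b = 2) V)"
  then have rc: "r < 27" "c < 27"
    by (simp_all add: ctrl_if_def)
  then have "place2 (ctrl2 V) 1 2 $$ (r, c) = (if trit r 0 = trit c 0 then
      ctrl2 V $$ (3 * trit r 1 + trit r 2, 3 * trit c 1 + trit c 2) else 0)"
    by (simp add: place2_def all_less_3)
  then show "place2 (ctrl2 V) 1 2 $$ (r, c) = ctrl_if (\<lambda>a b. b = 2) V $$ (r, c)"
    using rc by (simp add: ctrl2_index trit_lt ctrl_if_def)
qed (simp_all add: place2_def ctrl_if_def)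

lemma place2_CX_01_conj_ctrl_if:
  "place2 CX_gate 0 1 * place2 CX_gate 0 1 * ctrl_if \<phi> V * place2 CX_gate 0 1
    = ctrl_if (\<lambda>a b. \<phi> a ((a + b) mod 3)) V"
proof (rule eq_matI)
  fix r c assume "r < dim_row (ctrl_if (\<lambda>a b. \<phi> a ((a + b) mod 3)) V)"
    "c < dim_col (ctrl_if (\<lambda>a b. \<phi> a ((a + b) mod 3)) V)"
  then have rc: "r < 27" "c < 27"
    by (simp_all add: ctrl_if_def)
  have "(trit r 0 + trit r 1) mod 3 = (trit r 0 + trit c 1) mod 3 \<longleftrightarrow> trit r 1 = trit c 1"
    by (rule add_mod_cancel_left[OF trit_lt trit_lt])
  then show "(place2 CX_gate 0 1 * place2 CX_gate 0 1 * ctrl_if \<phi> V * place2 CX_gate 0 1) $$ (r, c)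
      = ctrl_if (\<lambda>a b. \<phi> a ((a + b) mod 3)) V $$ (r, c)"
    unfolding place2_CX_01_conj_index[OF ctrl_if_carrier rc]
    unfolding ctrl_if_def index_mat(1)[OF cx_shear_lt cx_shear_lt] index_mat(1)[OF rc] prod.case trit_cx_shear
    by auto
qed (simp_all add: place2_def ctrl_if_def)

lemma ctrl_if_emulates_CC:
  assumes em: "emulates 1 V' V"
    and \<phi>: "\<And>a b. a < 2 \<Longrightarrow> b < 2 \<Longrightarrow> \<phi> a b \<longleftrightarrow> a = 1 \<and> b = 1"
  shows "emulates 3 (ctrl_if \<phi> V') (CC_gate V)"
  unfolding emulates_def
proof (intro conjI allI impI)
  show "ctrl_if \<phi> V' \<in> carrier_mat (3 ^ 3) (3 ^ 3)"
    using ctrl_if_carrier by simp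
  show "CC_gate V \<in> carrier_mat (2 ^ 3) (2 ^ 3)"
    by (simp add: CC_gate_def)
  have two_pow_3: "(2::nat) ^ 3 = 8"
    by simp
  fix i r :: nat
  assume "i < 2 ^ 3" "r < 3 ^ 3"
  then have "i < 8" "r < 27"
    by simp_all
  obtain x y z where bits: "x < 2" "y < 2" "z < 2" and i: "i = 4 * x + 2 * y + z"
    using bits3_cases[OF \<open>i < 8\<close>] .
  obtain a b d where digits: "a < 3" "b < 3" "d < 3" and r: "r = 9 * a + 3 * b + d"
    using trits3_cases[OF \<open>r < 27\<close>] .
  have "ctrl_if \<phi> V' $$ (r, q2t 3 i) =
      (if a = x \<and> b = y then (if \<phi> x y then V' $$ (d, z) else if d = z then 1 else 0) else 0)"
    unfolding i q2t_3_bits[OF bits] r using digits bits by (simp add: ctrl_if_index)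
  also have "\<dots> = (if a < 2 \<and> b < 2 \<and> d < 2 then CC_gate V $$ (4 * a + 2 * b + d, i) else 0)"
    unfolding i using emulates_1_index[OF em digits(3) bits(3)] CC_gate_index bits \<phi>[OF bits(1,2)]
    by auto
  also have "\<dots> = (\<Sum>j<2 ^ 3. if q2t 3 j = r then CC_gate V $$ (j, i) else 0)"
    unfolding r two_pow_3 sum_q2t_3[OF digits] ..
  finally show "ctrl_if \<phi> V' $$ (r, q2t 3 i) = (\<Sum>j<2 ^ 3. if q2t 3 j = r then CC_gate V $$ (j, i) else 0)" .
qed

lemma clifford3_place2_CX_01: "clifford3 (place2 CX_gate 0 1)"
  using clifford3.CX[OF clifford3.id, of 0 1] place2_CX_01_carrier by simp

lemma clifford3_place2_CX_01_squared: "clifford3 (place2 CX_gate 0 1 * place2 CX_gate 0 1)"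
  using clifford3.CX[OF clifford3_place2_CX_01, of 0 1] by simp

theorem mainTheorem3:
  fixes U U' :: "complex mat"
  assumes "unitary_mat 2 U"
    and "unitary_mat 3 U'"
    and "emulates 1 U' U"
  shows "\<exists>C1 C2 p q. clifford3 C1 \<and> clifford3 C2 \<and> p < 3 \<and> q < 3 \<and> p \<noteq> q \<and>
           emulates 3 (C2 * place2 (ctrl2 U') p q * C1) (CC_gate U)"
proof -
  let ?P = "place2 CX_gate 0 1"
  have "?P * ?P * place2 (ctrl2 U') 1 2 * ?P = ctrl_if (\<lambda>a b. (a + b) mod 3 = 2) U'"
    unfolding place2_ctrl2_12 place2_CX_01_conj_ctrl_if ..
  moreover have "emulates 3 (ctrl_if (\<lambda>a b. (a + b) mod 3 = 2) U') (CC_gate U)"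
    using assms(3) by (rule ctrl_if_emulates_CC) (auto simp: less_2_cases_iff)
  ultimately have "emulates 3 (?P * ?P * place2 (ctrl2 U') 1 2 * ?P) (CC_gate U)"
    by simp
  then show ?thesis
    using clifford3_place2_CX_01 clifford3_place2_CX_01_squared
    by (intro exI[of _ ?P] exI[of _ "?P * ?P"] exI[of _ "1::nat"] exI[of _ "2::nat"]) simp
qed

end
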